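(* Let $k$ be a positive integer and let $G$ be a finite graph whose vertex set is partitioned into stable sets $V_1,\ldots,V_r$. If for each $i \in \{1,\ldots,r\}$ each vertex in $V_i$ has degree at most $\min\{k, |V_i|-k\}$, then for any vertex $v$ of $G$, $G$ has an ISR containing $v$.
   Context: An independent system of representatives (ISR) of $(V_1,\ldots,V_r)$ is a stable set of size $r$ in $G$ meeting each $V_i$ exactly once. *)

theory Defs
  imports Main
begin

definition fin_graph :: "'a set \<Rightarrow> ('a \<Rightarrow> 'a \<Rightarrow> bool) \<Rightarrow> bool" where
  "fin_graph V E \<longleftrightarrow> finite V \<and> (\<forall>u v. E u v \<longrightarrow> u \<in> V \<and> v \<in> V)
     \<and> (\<forall>u v. E u v \<longrightarrow> E v u) \<and> (\<forall>u. \<not> E u u)"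

definition degree :: "'a set \<Rightarrow> ('a \<Rightarrow> 'a \<Rightarrow> bool) \<Rightarrow> 'a \<Rightarrow> nat" where
  "degree V E v = card {u \<in> V. E v u}"

definition stable :: "('a \<Rightarrow> 'a \<Rightarrow> bool) \<Rightarrow> 'a set \<Rightarrow> bool" where
  "stable E S \<longleftrightarrow> (\<forall>u\<in>S. \<forall>v\<in>S. \<not> E u v)"

definition stable_partition :: "'a set \<Rightarrow> ('a \<Rightarrow> 'a \<Rightarrow> bool) \<Rightarrow> nat \<Rightarrow> (nat \<Rightarrow> 'a set) \<Rightarrow> bool" where
  "stable_partition V E r P \<longleftrightarrow>
     (\<Union>i\<in>{1..r}. P i) = V
     \<and> (\<forall>i\<in>{1..r}. \<forall>j\<in>{1..r}. i \<noteq> j \<longrightarrow> P i \<inter> P j = {})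
     \<and> (\<forall>i\<in>{1..r}. P i \<noteq> {} \<and> stable E (P i))"

definition ISR :: "'a set \<Rightarrow> ('a \<Rightarrow> 'a \<Rightarrow> bool) \<Rightarrow> nat \<Rightarrow> (nat \<Rightarrow> 'a set) \<Rightarrow> 'a set \<Rightarrow> bool" where
  "ISR V E r P S \<longleftrightarrow> S \<subseteq> V \<and> stable E S \<and> card S = r
     \<and> (\<forall>i\<in>{1..r}. card (S \<inter> P i) = 1)"

end

theory Submission
  imports Defs "HOL-Library.List_Lexorder"
begin

text \<open>
  Take a maximum partial ISR \<open>M\<close> containing \<open>v\<close> and suppose it misses a part \<open>V\<^sub>a\<close>.
  Grow a sequence of edges \<open>x\<^sub>j y\<^sub>j\<close> with \<open>y\<^sub>j \<in> M - {v}\<close>, where \<open>x\<^sub>j\<close> lies in \<open>V\<^sub>a\<close> or in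
  the part of an earlier \<open>y\<^sub>i\<close> and has no neighbour among \<open>v\<close> and the earlier \<open>x\<^sub>i, y\<^sub>i\<close>;
  among all such pairs (with \<open>M\<close> ranging over maximum partial ISRs avoiding \<open>V\<^sub>a\<close>), take one
  whose sequence of "non-neighbour counts" \<open>|V| - |N(x\<^sub>j) \<inter> M|\<close> is lexicographically largest.
  If the sequence cannot be prolonged, every vertex of the union \<open>W\<close> of the \<open>t + 1\<close> covered
  parts has a neighbour among \<open>v\<close>, the \<open>x\<^sub>j\<close> and the \<open>y\<^sub>j\<close>; as all degrees are at most \<open>k\<close> and
  \<open>|V\<^sub>i| \<ge> deg u + k\<close> for \<open>u \<in> V\<^sub>i\<close>, this gives
  \<open>k + 1 + t k + \<Sum> deg y\<^sub>j \<le> |W| \<le> (t + 1) k + \<Sum> deg y\<^sub>j\<close>.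
  Otherwise some free vertex \<open>x\<close> has no neighbour in \<open>M\<close> (else we could prolong): it either
  enlarges \<open>M\<close>, contradicting maximality, or replaces the representative \<open>y\<^sub>l\<close> of its part.
  This swap strictly lowers the number of \<open>M\<close>-neighbours of \<open>x\<^sub>l\<close> without raising it for
  earlier \<open>x\<^sub>j\<close>, so either \<open>x\<^sub>l\<close> keeps a neighbour and we get a larger configuration, or
  \<open>x\<^sub>l\<close> is free for the new set and the argument repeats on a shorter prefix.
\<close>

lemma list_less_snoc: "(xs :: 'a::linorder list) < xs @ [x]"
  by (induction xs) auto

lemma list_less_by_first_strict:
  fixes xs ys :: "'a::linorder list"
  assumes "l < length xs" "l < length ys" "\<forall>j<l. xs ! j \<le> ys ! j" "xs ! l < ys ! l"
  shows "xs < ys"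
  using assms
proof (induction l arbitrary: xs ys)
  case 0
  then show ?case by (cases xs; cases ys) auto
next
  case (Suc l)
  then obtain x xs' y ys' where xy: "xs = x # xs'" "ys = y # ys'"
    by (cases xs; cases ys) auto
  have "x \<le> y" using Suc.prems(3) xy by fastforce
  moreover have "xs' < ys'"
    by (rule Suc.IH) (use Suc.prems xy in \<open>auto dest: spec[of _ "Suc _"]\<close>)
  ultimately show ?case using xy by (auto simp: order.order_iff_strict)
qed

locale isr_instance =
  fixes V :: "'a set" and E :: "'a \<Rightarrow> 'a \<Rightarrow> bool" and r k :: nat and P :: "nat \<Rightarrow> 'a set"
    and v :: 'a
  assumes graph: "fin_graph V E" and partition: "stable_partition V E r P"
    and degree_bound: "\<forall>i\<in>{1..r}. \<forall>u\<in>P i.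
           int (degree V E u) \<le> min (int k) (int (card (P i)) - int k)"
    and v_in_V: "v \<in> V"
begin

lemma finite_V: "finite V"
  using graph unfolding fin_graph_def by blast

lemma E_sym: "E u w \<Longrightarrow> E w u"
  using graph unfolding fin_graph_def by blast

lemma E_irrefl: "\<not> E u u"
  using graph unfolding fin_graph_def by blast

lemma E_in_V: "E u w \<Longrightarrow> u \<in> V \<and> w \<in> V"
  using graph unfolding fin_graph_def by blast

lemma part_subset_V: "i \<in> {1..r} \<Longrightarrow> P i \<subseteq> V"
  using partition unfolding stable_partition_def by blast

lemma finite_part: "i \<in> {1..r} \<Longrightarrow> finite (P i)"
  using part_subset_V finite_V by (rule finite_subset)

lemma part_nonempty: "i \<in> {1..r} \<Longrightarrow> P i \<noteq> {}"
  using partition unfolding stable_partition_def by blast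

lemma part_unique: "i \<in> {1..r} \<Longrightarrow> j \<in> {1..r} \<Longrightarrow> u \<in> P i \<Longrightarrow> u \<in> P j \<Longrightarrow> i = j"
  using partition unfolding stable_partition_def by (auto simp: disjoint_iff)

lemma V_covered_by_parts: "u \<in> V \<Longrightarrow> \<exists>i\<in>{1..r}. u \<in> P i"
  using partition unfolding stable_partition_def by blast

definition nbhd :: "'a \<Rightarrow> 'a set" where
  "nbhd u = {w \<in> V. E u w}"

lemma finite_nbhd: "finite (nbhd u)"
  unfolding nbhd_def using finite_V by simp

lemma card_nbhd_plus_k_le_card_part:
  assumes "i \<in> {1..r}" "u \<in> P i"
  shows "card (nbhd u) + k \<le> card (P i)"
  using degree_bound assms unfolding degree_def nbhd_def by fastforce

lemma card_nbhd_le_k: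
  assumes "u \<in> V"
  shows "card (nbhd u) \<le> k"
  using V_covered_by_parts[OF assms] degree_bound unfolding degree_def nbhd_def by fastforce

definition part_of :: "'a \<Rightarrow> nat" where
  "part_of u = (THE i. i \<in> {1..r} \<and> u \<in> P i)"

lemma part_of_eq: "i \<in> {1..r} \<Longrightarrow> u \<in> P i \<Longrightarrow> part_of u = i"
  unfolding part_of_def by (rule the_equality) (use part_unique[of _ i u] in blast)+

lemma part_of_in: "u \<in> V \<Longrightarrow> part_of u \<in> {1..r}"
  and mem_part_of: "u \<in> V \<Longrightarrow> u \<in> P (part_of u)"
proof -
  assume "u \<in> V"
  then obtain i where "i \<in> {1..r}" "u \<in> P i" using V_covered_by_parts by blast
  then show "part_of u \<in> {1..r}" "u \<in> P (part_of u)" using part_of_eq by simp_all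
qed

definition nbr_count :: "'a set \<Rightarrow> 'a \<Rightarrow> nat" where
  "nbr_count M x = card {w \<in> M. E x w}"

lemma nbrs_in_subset_V: "{w \<in> M. E x w} \<subseteq> V"
  using E_in_V by blast

lemma finite_nbrs_in: "finite {w \<in> M. E x w}"
  using nbrs_in_subset_V finite_V by (rule finite_subset)

lemma nbr_count_le_card_V: "nbr_count M x \<le> card V"
  unfolding nbr_count_def using finite_V nbrs_in_subset_V by (rule card_mono)

lemma nbr_count_swap_le:
  assumes "\<not> E x z"
  shows "nbr_count (insert z (M - {y})) x \<le> nbr_count M x"
proof -
  have "{w \<in> insert z (M - {y}). E x w} \<subseteq> {w \<in> M. E x w}" using assms by blast
  with finite_nbrs_in show ?thesis unfolding nbr_count_def by (rule card_mono)
qed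

lemma nbr_count_swap_less:
  assumes "\<not> E x z" "y \<in> M" "E x y"
  shows "nbr_count (insert z (M - {y})) x < nbr_count M x"
proof -
  have "{w \<in> insert z (M - {y}). E x w} \<subseteq> {w \<in> M. E x w} - {y}"
    using assms(1) by blast
  then have "nbr_count (insert z (M - {y})) x \<le> card ({w \<in> M. E x w} - {y})"
    unfolding nbr_count_def using finite_nbrs_in by (intro card_mono) auto
  also have "\<dots> < nbr_count M x"
    unfolding nbr_count_def using assms(2,3) by (intro card_Diff1_less finite_nbrs_in) blast
  finally show ?thesis .
qed

definition partial_isr :: "'a set \<Rightarrow> bool" where
  "partial_isr M \<longleftrightarrow> M \<subseteq> V \<and> stable E M \<and> v \<in> M \<and> (\<forall>i\<in>{1..r}. card (M \<inter> P i) \<le> 1)"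

lemma partial_isr_finite: "partial_isr M \<Longrightarrow> finite M"
  unfolding partial_isr_def using finite_V rev_finite_subset by blast

lemma partial_isr_unique:
  assumes "partial_isr M" "i \<in> {1..r}" "x \<in> M" "y \<in> M" "x \<in> P i" "y \<in> P i"
  shows "x = y"
proof -
  have "finite (M \<inter> P i)" using partial_isr_finite[OF assms(1)] by blast
  moreover have "card (M \<inter> P i) \<le> Suc 0" using assms(1,2) unfolding partial_isr_def by simp
  ultimately show ?thesis using card_le_Suc0_iff_eq assms(3-6) by blast
qed

lemma partial_isr_singleton: "partial_isr {v}"
  unfolding partial_isr_def stable_def using v_in_V E_irrefl
  by (auto intro: order_trans[OF card_mono[of "{v}"]])

lemma partial_isr_remove:
  assumes "partial_isr M" "y \<noteq> v"
  shows "partial_isr (M - {y})"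
proof -
  have "card ((M - {y}) \<inter> P i) \<le> card (M \<inter> P i)" for i
    using partial_isr_finite[OF assms(1)] by (intro card_mono) auto
  moreover have "card (M \<inter> P i) \<le> 1" if "i \<in> {1..r}" for i
    using assms(1) that unfolding partial_isr_def by blast
  ultimately have "\<forall>i\<in>{1..r}. card ((M - {y}) \<inter> P i) \<le> 1" using order_trans by blast
  then show ?thesis using assms unfolding partial_isr_def stable_def by blast
qed

lemma partial_isr_insert:
  assumes "partial_isr M" "i \<in> {1..r}" "z \<in> P i" "M \<inter> P i = {}" "\<forall>w\<in>M. \<not> E z w"
  shows "partial_isr (insert z M)"
  unfolding partial_isr_def
proof (intro conjI ballI)
  show "insert z M \<subseteq> V" using assms(1-3) part_subset_V unfolding partial_isr_def by blast
  show "stable E (insert z M)"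
    using assms(1,5) E_sym E_irrefl unfolding partial_isr_def stable_def by blast
  show "v \<in> insert z M" using assms(1) unfolding partial_isr_def by blast
  fix j assume j: "j \<in> {1..r}"
  show "card (insert z M \<inter> P j) \<le> 1"
  proof (cases "j = i")
    case True
    then show ?thesis using assms(3,4) by (simp add: Int_insert_left)
  next
    case False
    then have "insert z M \<inter> P j = M \<inter> P j" using part_unique[OF j assms(2)] assms(3) by blast
    then show ?thesis using assms(1) j unfolding partial_isr_def by simp
  qed
qed

lemma exists_maximum_partial_isr:
  "\<exists>M. partial_isr M \<and> (\<forall>M'. partial_isr M' \<longrightarrow> card M' \<le> card M)"
proof -
  have "\<forall>M. partial_isr M \<longrightarrow> card M < Suc (card V)"
    unfolding partial_isr_def using card_mono[OF finite_V] by (simp add: le_imp_less_Suc)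
  then show ?thesis using arg_max_nat_lemma[of partial_isr "{v}" card, OF partial_isr_singleton] by blast
qed

lemma partial_isr_meeting_all_parts_is_ISR:
  assumes "partial_isr M" "\<forall>i\<in>{1..r}. M \<inter> P i \<noteq> {}"
  shows "ISR V E r P M"
proof -
  have fin: "finite M" using partial_isr_finite[OF assms(1)] .
  have one: "card (M \<inter> P i) = 1" if "i \<in> {1..r}" for i
    using assms that fin unfolding partial_isr_def by (simp add: le_Suc_eq)
  have "M = (\<Union>i\<in>{1..r}. M \<inter> P i)"
    using assms(1) V_covered_by_parts unfolding partial_isr_def by blast
  also have "card \<dots> = (\<Sum>i\<in>{1..r}. card (M \<inter> P i))"
  proof (rule card_UN_disjoint)
    show "\<forall>i\<in>{1..r}. \<forall>j\<in>{1..r}. i \<noteq> j \<longrightarrow> M \<inter> P i \<inter> (M \<inter> P j) = {}"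
      using part_unique by blast
  qed (use fin in auto)
  also have "\<dots> = r" using one by simp
  finally have "card M = r" .
  then show ?thesis using assms(1) one unfolding ISR_def partial_isr_def by blast
qed

end

locale missed_part = isr_instance +
  fixes M0 :: "'a set" and a :: nat
  assumes M0_partial_isr: "partial_isr M0"
    and M0_maximum: "\<And>M. partial_isr M \<Longrightarrow> card M \<le> card M0"
    and a_part: "a \<in> {1..r}" and M0_misses_a: "M0 \<inter> P a = {}"
begin

definition maximum_avoiding :: "'a set \<Rightarrow> bool" where
  "maximum_avoiding M \<longleftrightarrow> partial_isr M \<and> M \<inter> P a = {} \<and> card M = card M0"

lemma maximum_avoiding_not_extendable:
  assumes "maximum_avoiding M" "z \<in> P a" "\<forall>w\<in>M. \<not> E z w"
  shows False
proof -
  have "partial_isr (insert z M)"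
    using assms partial_isr_insert[OF _ a_part] unfolding maximum_avoiding_def by blast
  then have "card (insert z M) \<le> card M" using M0_maximum assms(1) unfolding maximum_avoiding_def by simp
  moreover have "z \<notin> M" using assms(1,2) unfolding maximum_avoiding_def by blast
  ultimately show False using partial_isr_finite assms(1) unfolding maximum_avoiding_def by simp
qed

lemma maximum_avoiding_swap:
  assumes M: "maximum_avoiding M" and y: "y \<in> M" "y \<noteq> v" "y \<in> P i" and i: "i \<in> {1..r}"
    and z: "z \<in> P i" "\<forall>w\<in>M. \<not> E z w"
  shows "maximum_avoiding (insert z (M - {y}))"
proof -
  have pM: "partial_isr M" and fin: "finite M" using M partial_isr_finite unfolding maximum_avoiding_def by auto
  have "(M - {y}) \<inter> P i = {}" using partial_isr_unique[OF pM i _ y(1) _ y(3)] by blast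
  then have "partial_isr (insert z (M - {y}))"
    using partial_isr_insert[OF partial_isr_remove[OF pM y(2)] i z(1)] z(2) by blast
  moreover have "z \<notin> P a" using part_unique[OF a_part i] y(1,3) z(1) M unfolding maximum_avoiding_def by blast
  moreover have "card (insert z (M - {y})) = card M"
    using \<open>(M - {y}) \<inter> P i = {}\<close> z(1) fin y(1)
    by (metis IntI card_insert_disjoint finite_Diff card_Suc_Diff1 empty_iff)
  ultimately show ?thesis using M unfolding maximum_avoiding_def by auto
qed

definition covered :: "('a \<times> 'a) list \<Rightarrow> 'a set" where
  "covered T = P a \<union> (\<Union>q\<in>set T. P (part_of (snd q)))"

definition used :: "('a \<times> 'a) list \<Rightarrow> 'a set" where
  "used T = insert v (fst ` set T \<union> snd ` set T)"

definition free :: "('a \<times> 'a) list \<Rightarrow> 'a \<Rightarrow> bool" where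
  "free T x \<longleftrightarrow> x \<in> covered T \<and> (\<forall>w\<in>used T. \<not> E x w)"

definition admissible_step :: "'a set \<Rightarrow> ('a \<times> 'a) list \<Rightarrow> 'a \<Rightarrow> 'a \<Rightarrow> bool" where
  "admissible_step M T x y \<longleftrightarrow> free T x \<and> E x y \<and> y \<in> M \<and> y \<noteq> v"

definition admissible :: "'a set \<Rightarrow> ('a \<times> 'a) list \<Rightarrow> bool" where
  "admissible M T \<longleftrightarrow> (\<forall>j<length T. admissible_step M (take j T) (fst (T ! j)) (snd (T ! j)))"

definition config :: "'a set \<Rightarrow> ('a \<times> 'a) list \<Rightarrow> bool" where
  "config M T \<longleftrightarrow> maximum_avoiding M \<and> admissible M T"

text \<open>Keys are compared lexicographically: prolonging \<open>T\<close> increases the key, and so does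
  lowering the number of \<open>M\<close>-neighbours of some \<open>x\<^sub>l\<close> while not raising it for earlier ones.\<close>
definition key :: "'a set \<Rightarrow> ('a \<times> 'a) list \<Rightarrow> nat list" where
  "key M T = map (\<lambda>q. card V - nbr_count M (fst q)) T"

lemma admissible_snoc:
  "admissible M (T @ [(x, y)]) \<longleftrightarrow> admissible M T \<and> admissible_step M T x y"
  unfolding admissible_def by (auto simp: nth_append less_Suc_eq)

lemma admissible_take: "admissible M T \<Longrightarrow> admissible M (take l T)"
  unfolding admissible_def by (auto simp: min_def)

lemma admissible_nth:
  "admissible M T \<Longrightarrow> j < length T \<Longrightarrow> admissible_step M (take j T) (fst (T ! j)) (snd (T ! j))"
  unfolding admissible_def by blast

lemma admissible_mono: "admissible M T \<Longrightarrow> snd ` set T \<subseteq> M' \<Longrightarrow> admissible M' T"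
  unfolding admissible_def admissible_step_def by (auto dest: nth_mem)

lemma admissible_edge:
  assumes "admissible M T" "q \<in> set T"
  shows "E (fst q) (snd q)" "snd q \<in> M" "snd q \<noteq> v"
proof -
  obtain j where "j < length T" "q = T ! j" using assms(2) by (auto simp: in_set_conv_nth)
  then show "E (fst q) (snd q)" "snd q \<in> M" "snd q \<noteq> v"
    using admissible_nth[OF assms(1)] unfolding admissible_step_def by auto
qed

lemma admissible_step_not_used: "admissible_step M T x y \<Longrightarrow> y \<notin> used T"
  unfolding admissible_step_def free_def by blast

lemma admissible_distinct_snd: "admissible M T \<Longrightarrow> distinct (map snd T)"
proof (induction T rule: rev_induct)
  case (snoc q T)
  obtain x y where q: "q = (x, y)" by fastforce
  then have "admissible M T" "admissible_step M T x y"
    using snoc.prems by (simp_all add: admissible_snoc)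
  moreover from this(2) have "y \<notin> snd ` set T"
    using admissible_step_not_used unfolding used_def by blast
  ultimately show ?case using snoc.IH q by simp
qed simp

lemma config_edge_part:
  assumes "config M T" "q \<in> set T"
  shows "part_of (snd q) \<in> {1..r}" "snd q \<in> P (part_of (snd q))" "part_of (snd q) \<noteq> a"
proof -
  have "E (fst q) (snd q)" "snd q \<in> M" using assms admissible_edge unfolding config_def by blast+
  then have "snd q \<in> V" using E_in_V by blast
  then show "part_of (snd q) \<in> {1..r}" "snd q \<in> P (part_of (snd q))"
    using part_of_in mem_part_of by blast+
  then show "part_of (snd q) \<noteq> a" using \<open>snd q \<in> M\<close> assms(1) unfolding config_def maximum_avoiding_def by auto
qed

lemma config_inj_on_part:
  assumes "config M T"
  shows "inj_on (\<lambda>q. part_of (snd q)) (set T)"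
proof (rule inj_onI)
  fix q q' assume q: "q \<in> set T" "q' \<in> set T" and eq: "part_of (snd q) = part_of (snd q')"
  have "partial_isr M" using assms unfolding config_def maximum_avoiding_def by blast
  then have "snd q = snd q'"
    using partial_isr_unique[of M _ "snd q" "snd q'"] config_edge_part[OF assms] admissible_edge q eq assms
    unfolding config_def by metis
  moreover have "inj_on snd (set T)"
    using admissible_distinct_snd assms unfolding config_def distinct_map by blast
  ultimately show "q = q'" using q by (auto dest: inj_onD)
qed

lemma config_length_le: "config M T \<Longrightarrow> length T \<le> card V"
proof -
  assume C: "config M T"
  then have "length T = card (snd ` set T)"
    using admissible_distinct_snd unfolding config_def by (metis distinct_card length_map set_map)
  moreover have "snd ` set T \<subseteq> V" using admissible_edge E_in_V C unfolding config_def by blast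
  ultimately show ?thesis using card_mono[OF finite_V] by simp
qed

lemma finite_config_keys: "finite {key M T | M T. config M T}"
proof (rule finite_subset)
  show "{key M T | M T. config M T} \<subseteq> {ks. set ks \<subseteq> {0..card V} \<and> length ks \<le> card V}"
    unfolding key_def using config_length_le by auto
qed (simp add: finite_lists_length_le)

lemma card_covered:
  assumes "config M T"
  shows "card (covered T) = card (P a) + (\<Sum>q\<in>set T. card (P (part_of (snd q))))"
proof -
  let ?I = "(\<lambda>q. part_of (snd q)) ` set T"
  have I: "?I \<subseteq> {1..r}" "a \<notin> ?I" using config_edge_part[OF assms] by blast+
  have "covered T = (\<Union>i\<in>insert a ?I. P i)" unfolding covered_def by blast
  also have "card \<dots> = (\<Sum>i\<in>insert a ?I. card (P i))"
  proof (rule card_UN_disjoint)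
    have "insert a ?I \<subseteq> {1..r}" using I(1) a_part by blast
    then show "\<forall>i\<in>insert a ?I. finite (P i)"
      using finite_part by blast
    show "\<forall>i\<in>insert a ?I. \<forall>j\<in>insert a ?I. i \<noteq> j \<longrightarrow> P i \<inter> P j = {}"
      using \<open>insert a ?I \<subseteq> {1..r}\<close> part_unique by blast
  qed simp
  also have "\<dots> = card (P a) + (\<Sum>q\<in>set T. card (P (part_of (snd q))))"
    using I(2) sum.reindex[OF config_inj_on_part[OF assms]] by simp
  finally show ?thesis .
qed

lemma blocked_config_impossible:
  assumes C: "config M T" and blocked: "\<forall>x\<in>covered T. \<exists>w\<in>used T. E x w"
  shows False
proof -
  let ?t = "card (set T)" and ?D = "insert v (fst ` set T)"
  let ?degs = "\<Sum>q\<in>set T. card (nbhd (snd q))"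
  obtain u where u: "u \<in> P a" using part_nonempty[OF a_part] by blast
  then obtain w where "E u w" using blocked unfolding covered_def by blast
  then have "nbhd u \<noteq> {}" using E_in_V unfolding nbhd_def by blast
  then have "card (nbhd u) > 0" using finite_nbhd by (simp add: card_gt_0_iff)
  then have "k + 1 \<le> card (P a)" using card_nbhd_plus_k_le_card_part[OF a_part u] by linarith
  moreover have "?degs + ?t * k \<le> (\<Sum>q\<in>set T. card (P (part_of (snd q))))"
  proof -
    have "?degs + ?t * k = (\<Sum>q\<in>set T. card (nbhd (snd q)) + k)" by (simp add: sum.distrib)
    also have "\<dots> \<le> (\<Sum>q\<in>set T. card (P (part_of (snd q))))"
      using card_nbhd_plus_k_le_card_part config_edge_part[OF C] by (intro sum_mono) blast
    finally show ?thesis .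
  qed
  ultimately have lower: "k + 1 + ?degs + ?t * k \<le> card (covered T)"
    using card_covered[OF C] by simp
  have "covered T \<subseteq> (\<Union>w\<in>?D. nbhd w) \<union> (\<Union>q\<in>set T. nbhd (snd q))"
  proof
    fix x assume "x \<in> covered T"
    then obtain w where w: "w \<in> used T" "E x w" using blocked by blast
    then have "x \<in> nbhd w" using E_in_V E_sym unfolding nbhd_def by blast
    moreover have "w \<in> ?D \<or> (\<exists>q\<in>set T. w = snd q)" using w(1) unfolding used_def by blast
    ultimately show "x \<in> (\<Union>w\<in>?D. nbhd w) \<union> (\<Union>q\<in>set T. nbhd (snd q))" by blast
  qed
  then have "card (covered T) \<le> card ((\<Union>w\<in>?D. nbhd w) \<union> (\<Union>q\<in>set T. nbhd (snd q)))"
    by (intro card_mono) (simp_all add: finite_nbhd)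
  also have "\<dots> \<le> card (\<Union>w\<in>?D. nbhd w) + card (\<Union>q\<in>set T. nbhd (snd q))"
    by (rule card_Un_le)
  also have "\<dots> \<le> (\<Sum>w\<in>?D. card (nbhd w)) + ?degs"
    by (intro add_mono card_UN_le) simp_all
  also have "(\<Sum>w\<in>?D. card (nbhd w)) \<le> card ?D * k"
  proof -
    have "card (nbhd w) \<le> k" if "w \<in> ?D" for w
      using that v_in_V admissible_edge(1) E_in_V C card_nbhd_le_k unfolding config_def by blast
    then have "(\<Sum>w\<in>?D. card (nbhd w)) \<le> of_nat (card ?D) * k" by (rule sum_bounded_above)
    then show ?thesis by simp
  qed
  also have "card ?D \<le> ?t + 1"
    using card_image_le[of "set T" fst] by (simp add: card_insert_if)
  finally have "card (covered T) \<le> (?t + 1) * k + ?degs" by (simp add: mult_right_mono)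
  with lower show False by (simp add: algebra_simps)
qed

lemma key_less_truncate_snoc:
  assumes l: "l < length T"
    and le: "\<forall>j<l. nbr_count M' (fst (T ! j)) \<le> nbr_count M (fst (T ! j))"
    and less: "nbr_count M' (fst (T ! l)) < nbr_count M (fst (T ! l))"
  shows "key M T < key M' (take l T @ [(fst (T ! l), y)])"
proof -
  let ?T' = "take l T @ [(fst (T ! l), y)]"
  have key_T: "key M T ! j = card V - nbr_count M (fst (T ! j))" if "j < length T" for j
    using that by (simp add: key_def)
  have key_T': "key M' ?T' ! j = card V - nbr_count M' (fst (T ! j))" if "j \<le> l" for j
    using that l by (auto simp: key_def nth_append)
  show ?thesis
  proof (rule list_less_by_first_strict[of l])
    show "\<forall>j<l. key M T ! j \<le> key M' ?T' ! j" using le key_T key_T' l by (simp add: diff_le_mono2)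
    show "key M T ! l < key M' ?T' ! l"
      using less key_T key_T' l nbr_count_le_card_V[of M "fst (T ! l)"] by simp
  qed (use l in \<open>simp_all add: key_def\<close>)
qed

lemma config_swap_prefix:
  assumes C: "config M T" and l: "l < m" and m: "m \<le> length T"
    and Cs: "config Ms (take m T)"
    and counts: "\<forall>j<m. nbr_count Ms (fst (T ! j)) \<le> nbr_count M (fst (T ! j))"
    and z_free: "free (take m T) z" and z_indep: "\<forall>w\<in>Ms. \<not> E z w"
    and z_part: "z \<in> P (part_of (snd (T ! l)))"
  defines "Ms' \<equiv> insert z (Ms - {snd (T ! l)})"
  shows "config Ms' (take l T)"
    and "\<forall>j<l. nbr_count Ms' (fst (T ! j)) \<le> nbr_count M (fst (T ! j))"
    and "nbr_count Ms' (fst (T ! l)) < nbr_count M (fst (T ! l))"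
proof -
  define x y where "x = fst (T ! l)" and "y = snd (T ! l)"
  have nth_take: "T ! j \<in> set (take m T)" if "j < m" for j
    using that m by (metis in_set_conv_nth length_take min.absorb2 nth_take)
  have z_not_used: "\<not> E (fst (T ! j)) z" if "j < m" for j
    using z_free nth_take[OF that] E_sym unfolding free_def used_def by blast
  have step: "admissible_step M (take l T) x y"
    using admissible_nth C l m unfolding config_def x_def y_def by simp
  have y: "y \<in> Ms" "y \<noteq> v" "E x y"
    using admissible_edge[of Ms "take m T" "T ! l"] Cs nth_take[OF l]
    unfolding config_def x_def y_def by auto
  then have "y \<in> V" using E_in_V by blast
  then have Ms': "maximum_avoiding Ms'"
    using maximum_avoiding_swap[OF _ y(1,2)] Cs part_of_in mem_part_of z_part z_indep
    unfolding Ms'_def y_def config_def by blast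
  have "snd ` set (take l T) \<subseteq> Ms"
    using admissible_edge(2) Cs set_take_subset_set_take[of l m T] l unfolding config_def by fastforce
  moreover have "y \<notin> snd ` set (take l T)"
    using admissible_step_not_used[OF step] unfolding used_def by blast
  ultimately have "snd ` set (take l T) \<subseteq> Ms'" unfolding Ms'_def y_def by blast
  moreover have "admissible M (take l T)" using C admissible_take unfolding config_def by blast
  ultimately show "config Ms' (take l T)" using Ms' admissible_mono unfolding config_def by blast
  show "\<forall>j<l. nbr_count Ms' (fst (T ! j)) \<le> nbr_count M (fst (T ! j))"
  proof (intro allI impI)
    fix j assume j: "j < l"
    have "nbr_count Ms' (fst (T ! j)) \<le> nbr_count Ms (fst (T ! j))"
      unfolding Ms'_def using z_not_used j l by (intro nbr_count_swap_le) simp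
    also have "\<dots> \<le> nbr_count M (fst (T ! j))" using counts j l by simp
    finally show "nbr_count Ms' (fst (T ! j)) \<le> nbr_count M (fst (T ! j))" .
  qed
  have "nbr_count Ms' x < nbr_count Ms x"
    unfolding Ms'_def using z_not_used[OF l, folded x_def] y(1,3)
    unfolding y_def by (rule nbr_count_swap_less)
  also have "\<dots> \<le> nbr_count M x" using counts l unfolding x_def by blast
  finally show "nbr_count Ms' (fst (T ! l)) < nbr_count M (fst (T ! l))" unfolding x_def .
qed

lemma improve_config:
  assumes C: "config M T"
  shows "m \<le> length T \<Longrightarrow> config Ms (take m T) \<Longrightarrow>
    \<forall>j<m. nbr_count Ms (fst (T ! j)) \<le> nbr_count M (fst (T ! j)) \<Longrightarrow>
    free (take m T) z \<Longrightarrow> \<forall>w\<in>Ms. \<not> E z w \<Longrightarrow>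
    \<exists>M' T'. config M' T' \<and> key M T < key M' T'"
proof (induction m arbitrary: Ms z rule: less_induct)
  case (less m)
  note m_le = less.prems(1) and z_free = less.prems(4)
  consider "z \<in> P a" | l where "l < m" "z \<in> P (part_of (snd (T ! l)))"
    using z_free m_le unfolding free_def covered_def by (auto simp: in_set_conv_nth)
  then show ?case
  proof cases
    case 1
    then show ?thesis
      using maximum_avoiding_not_extendable less.prems(2,5) unfolding config_def by blast
  next
    case (2 l)
    let ?x = "fst (T ! l)" and ?Ms' = "insert z (Ms - {snd (T ! l)})"
    have l: "l < length T" using 2 m_le by simp
    note swap = config_swap_prefix[OF C 2(1) less.prems(1-5) 2(2)]
    have x_free: "free (take l T) ?x"
      using admissible_nth C l unfolding config_def admissible_step_def by blast
    show ?thesis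
    proof (cases "\<exists>y'\<in>?Ms'. E ?x y'")
      case True
      then obtain y' where y': "y' \<in> ?Ms'" "E ?x y'" by blast
      have "y' \<noteq> v" using x_free y'(2) unfolding free_def used_def by blast
      then have "config ?Ms' (take l T @ [(?x, y')])"
        using swap(1) x_free y' unfolding config_def admissible_snoc admissible_step_def by blast
      moreover have "key M T < key ?Ms' (take l T @ [(?x, y')])"
        using key_less_truncate_snoc[OF l swap(2,3)] .
      ultimately show ?thesis by blast
    next
      case False
      then show ?thesis using less.IH[OF 2(1) _ swap(1,2) x_free] l by auto
    qed
  qed
qed

lemma missed_part_impossible: False
proof -
  have "config M0 []" unfolding config_def maximum_avoiding_def admissible_def
    using M0_partial_isr M0_misses_a by simp
  then have "{key M T | M T. config M T} \<noteq> {}" by blast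
  from Max_in[OF finite_config_keys this] obtain M T
    where C: "config M T" and max: "key M T = Max {key M T | M T. config M T}" by auto
  have top: "\<not> key M T < key M' T'" if "config M' T'" for M' T'
  proof -
    have "key M' T' \<le> key M T" unfolding max using that by (intro Max_ge finite_config_keys) blast
    then show ?thesis by simp
  qed
  show False
  proof (cases "\<exists>x. free T x")
    case False
    then show False using blocked_config_impossible[OF C] unfolding free_def by blast
  next
    case True
    then obtain x where x: "free T x" by blast
    show False
    proof (cases "\<exists>y\<in>M. E x y")
      case True
      then obtain y where y: "y \<in> M" "E x y" by blast
      have "y \<noteq> v" using x y(2) unfolding free_def used_def by blast
      then have "config M (T @ [(x, y)])"
        using C x y unfolding config_def admissible_snoc admissible_step_def by blast
      moreover have "key M T < key M (T @ [(x, y)])"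
        unfolding key_def using list_less_snoc by simp
      ultimately show False using top by blast
    next
      case False
      then show False
        using improve_config[OF C order.refl, of M x] C x top by auto
    qed
  qed
qed

end

theorem theorem5:
  fixes V :: "'a set" and E :: "'a \<Rightarrow> 'a \<Rightarrow> bool" and r k :: nat and P :: "nat \<Rightarrow> 'a set"
  assumes "k \<ge> 1"
    and "fin_graph V E"
    and "stable_partition V E r P"
    and "\<forall>i\<in>{1..r}. \<forall>u\<in>P i.
           int (degree V E u) \<le> min (int k) (int (card (P i)) - int k)"
    and "v \<in> V"
  shows "\<exists>S. ISR V E r P S \<and> v \<in> S"
proof -
  interpret isr_instance V E r k P v using assms(2-5) by unfold_locales
  obtain M0 where M0: "partial_isr M0" "\<And>M. partial_isr M \<Longrightarrow> card M \<le> card M0"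
    using exists_maximum_partial_isr by blast
  have "M0 \<inter> P i \<noteq> {}" if "i \<in> {1..r}" for i
  proof
    assume "M0 \<inter> P i = {}"
    then interpret missed_part V E r k P v M0 i using M0 that by unfold_locales
    show False by (rule missed_part_impossible)
  qed
  then have "ISR V E r P M0" using partial_isr_meeting_all_parts_is_ISR M0(1) by blast
  then show ?thesis using M0(1) unfolding partial_isr_def by blast
qed

end
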